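(* Let $p>3$ be a prime, $a,m\in\mathbb Z_p$ with $m\not\equiv0\pmod p$ and $a\not\equiv0,\pm1,-2\pmod p$, and put $A_k=\binom ak\binom{-1-a}k\binom{2k}k$. Then $$\sum_{k=0}^{p-3}\frac{A_k}{m^k(k+2)}\equiv\frac{4-m}{6(a-1)(a+2)}\sum_{k=0}^{p-1}\frac{kA_k}{m^k}+\frac{m-6}{6(a-1)(a+2)}\sum_{k=0}^{p-1}\frac{A_k}{m^k}+\frac{2a(a+1)-m}{6(a-1)(a+2)}\sum_{k=0}^{p-2}\frac{A_k}{m^k(k+1)}\pmod{p^3}.$$
   Context: $\mathbb Z_p$ denotes the set of rational numbers whose denominator is not divisible by $p$; for $u,v\in\mathbb Z_p$, $u\equiv v\pmod{p^r}$ means $(u-v)/p^r\in\mathbb Z_p$. For $a$ rational, $\binom a0=1$ and $\binom ak=\frac{a(a-1)\cdots(a-k+1)}{k!}$ for $k\ge1$. *)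

theory Defs
  imports Complex_Main "HOL-Computational_Algebra.Primes"
begin

definition p_integral :: "nat \<Rightarrow> rat \<Rightarrow> bool" where
  "p_integral p x \<longleftrightarrow> \<not> (int p dvd snd (quotient_of x))"

definition rat_cong :: "rat \<Rightarrow> rat \<Rightarrow> nat \<Rightarrow> nat \<Rightarrow> bool" where
  "rat_cong u v p r \<longleftrightarrow> p_integral p ((u - v) / (of_nat p) ^ r)"

definition A_seq :: "rat \<Rightarrow> nat \<Rightarrow> rat" where
  "A_seq a k = (a gchoose k) * ((-1 - a) gchoose k) * of_nat ((2*k) choose k)"

end

theory Submission
  imports Defs "HOL-Number_Theory.Cong"
begin

(*
  By the recurrence (k+1)^3 A_(k+1) = -2 (2k+1) (a-k) (a+k+1) A_k the weighted sums telescope: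
  for every n the exact rational identity

    (4-m) sum_(k<=n+1) k A_k/m^k + (m-6) sum_(k<=n+1) A_k/m^k
      + (2a(a+1)-m) sum_(k<=n) A_k/(m^k (k+1)) - 6(a-1)(a+2) sum_(k<n) A_k/(m^k (k+2))
    = (4n-6+2a(a+1)/(n+1)) A_n/m^n + (4n-2-mn) A_(n+1)/m^(n+1)

  holds. For n = p-2 both boundary terms vanish modulo p^3, since for n in {p-2, p-1} each of
  the three factors of A_n is divisible by p: the central binomial coefficient because
  n < p <= 2n, and binom(a,n), binom(-1-a,n) because the residues of a and -1-a modulo p are
  less than n (this is where a is assumed incongruent to 0, 1, -1, -2), so that one factor of the falling
  factorial is divisible by p while n! is prime to p.
*)

lemma gbinomial_Suc_mult:
  "(of_nat k + 1) * (x gchoose Suc k) = (x - of_nat k) * (x gchoose k :: 'a :: field_char_0)"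
  using gbinomial_absorption[of k x] gbinomial_absorb_comp[of x k] by (simp add: add.commute)

lemma central_binomial_Suc:
  "Suc k * ((2 * Suc k) choose Suc k) = 2 * (2 * k + 1) * ((2 * k) choose k)"
proof -
  have "Suc k * ((2 * Suc k) choose Suc k) = 2 * (Suc k * (Suc (2 * k) choose k))"
    using Suc_times_binomial[of k "Suc (2 * k)"] by (simp del: binomial_Suc_Suc)
  also have "Suc (2 * k) choose k = Suc (2 * k) choose Suc k"
    using binomial_symmetric[of k "Suc (2 * k)"] by simp
  also have "Suc k * (Suc (2 * k) choose Suc k) = (2 * k + 1) * ((2 * k) choose k)"
    using Suc_times_binomial_eq[of "2 * k" k] by simp
  finally show ?thesis by simp
qed

lemma A_seq_Suc:
  "(of_nat k + 1) ^ 3 * A_seq a (Suc k)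
     = -2 * (2 * of_nat k + 1) * (a - of_nat k) * (a + of_nat k + 1) * A_seq a k"
proof -
  have "(of_nat k + 1) ^ 3 * A_seq a (Suc k)
      = ((of_nat k + 1) * (a gchoose Suc k)) * ((of_nat k + 1) * ((-1 - a) gchoose Suc k))
        * of_nat (Suc k * ((2 * Suc k) choose Suc k))"
    unfolding A_seq_def power3_eq_cube by (simp only: of_nat_mult of_nat_Suc mult_ac add.commute)
  also have "\<dots> = ((a - of_nat k) * (a gchoose k)) * ((-1 - a - of_nat k) * ((-1 - a) gchoose k))
        * (2 * (2 * of_nat k + 1) * of_nat ((2 * k) choose k))"
    unfolding gbinomial_Suc_mult central_binomial_Suc by (simp add: algebra_simps)
  also have "\<dots> = -2 * (2 * of_nat k + 1) * (a - of_nat k) * (a + of_nat k + 1) * A_seq a k"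
    unfolding A_seq_def by (simp only: mult_ac) (simp add: algebra_simps)
  finally show ?thesis .
qed

lemma A_seq_sum_identity_step:
  fixes a m N X Y Z :: rat
  assumes "N + 1 \<noteq> 0" "N + 2 \<noteq> 0"
    and rec: "(N + 1) ^ 3 * m * Y = -2 * (2 * N + 1) * (a - N) * (a + N + 1) * X"
  shows "(4 * (N + 1) - 6 + 2 * a * (a + 1) / (N + 2)) * Y + (4 * (N + 1) - 2 - m * (N + 1)) * Z
    = (4 * N - 6 + 2 * a * (a + 1) / (N + 1)) * X + (4 * N - 2 - m * N) * Y
      + ((4 - m) * (N + 2) + (m - 6)) * Z + (2 * a * (a + 1) - m) * Y / (N + 2)
      - 6 * (a - 1) * (a + 2) * X / (N + 2)"
proof -
  define u v where "u = inverse (N + 1)" and "v = inverse (N + 2)"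
  have u: "(N + 1) * u = 1" and v: "(N + 2) * v = 1"
    unfolding u_def v_def using assms(1,2) by simp_all
  have div: "x / (N + 1) = x * u" "x / (N + 2) = x * v" for x
    unfolding u_def v_def by (simp_all add: divide_inverse)
  \<comment> \<open>in terms of u and v the claim is a polynomial identity in the ideal generated by rec\<close>
  show ?thesis unfolding div using u v rec by algebra
qed

lemma A_seq_sum_identity:
  fixes a m :: rat
  assumes "m \<noteq> 0"
  shows "(4 - m) * (\<Sum>k\<le>Suc n. of_nat k * A_seq a k / m ^ k)
       + (m - 6) * (\<Sum>k\<le>Suc n. A_seq a k / m ^ k)
       + (2 * a * (a + 1) - m) * (\<Sum>k\<le>n. A_seq a k / (m ^ k * (of_nat k + 1)))
       - 6 * (a - 1) * (a + 2) * (\<Sum>k<n. A_seq a k / (m ^ k * (of_nat k + 2)))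
     = (4 * of_nat n - 6 + 2 * a * (a + 1) / (of_nat n + 1)) * (A_seq a n / m ^ n)
       + (4 * of_nat n - 2 - m * of_nat n) * (A_seq a (Suc n) / m ^ Suc n)"
  (is "?lhs n = ?rhs n")
proof (induction n)
  case 0
  show ?case using assms by (simp add: field_simps)
next
  case (Suc n)
  define N X Y Z where "N = (of_nat n :: rat)" and "X = A_seq a n / m ^ n"
    and "Y = A_seq a (Suc n) / m ^ Suc n" and "Z = A_seq a (Suc (Suc n)) / m ^ Suc (Suc n)"
  have N: "N + 1 \<noteq> 0" "N + 2 \<noteq> 0"
    unfolding N_def by (simp_all add: add_pos_nonneg)
  have "(N + 1) ^ 3 * m * Y = -2 * (2 * N + 1) * (a - N) * (a + N + 1) * X"
    unfolding N_def X_def Y_def using A_seq_Suc[of n a] assms by (simp add: field_simps)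
  note step = A_seq_sum_identity_step[OF N this, of Z]
  have sums: "(\<Sum>k\<le>Suc (Suc n). of_nat k * A_seq a k / m ^ k)
      = (\<Sum>k\<le>Suc n. of_nat k * A_seq a k / m ^ k) + (N + 2) * Z"
    "(\<Sum>k\<le>Suc (Suc n). A_seq a k / m ^ k) = (\<Sum>k\<le>Suc n. A_seq a k / m ^ k) + Z"
    "(\<Sum>k\<le>Suc n. A_seq a k / (m ^ k * (of_nat k + 1)))
      = (\<Sum>k\<le>n. A_seq a k / (m ^ k * (of_nat k + 1))) + Y / (N + 2)"
    "(\<Sum>k<Suc n. A_seq a k / (m ^ k * (of_nat k + 2)))
      = (\<Sum>k<n. A_seq a k / (m ^ k * (of_nat k + 2))) + X / (N + 2)"
    unfolding N_def X_def Y_def Z_def by (simp_all add: add_ac divide_divide_eq_left)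
  have "?lhs (Suc n) = ?lhs n + ((4 - m) * (N + 2) + (m - 6)) * Z
      + (2 * a * (a + 1) - m) * Y / (N + 2) - 6 * (a - 1) * (a + 2) * X / (N + 2)"
    unfolding sums by (simp add: algebra_simps add_divide_distrib diff_divide_distrib)
  also have "?lhs n = (4 * N - 6 + 2 * a * (a + 1) / (N + 1)) * X + (4 * N - 2 - m * N) * Y"
    unfolding Suc.IH N_def X_def Y_def ..
  also have "\<dots> + ((4 - m) * (N + 2) + (m - 6)) * Z
      + (2 * a * (a + 1) - m) * Y / (N + 2) - 6 * (a - 1) * (a + 2) * X / (N + 2)
      = (4 * (N + 1) - 6 + 2 * a * (a + 1) / (N + 2)) * Y + (4 * (N + 1) - 2 - m * (N + 1)) * Z"
    using step by (rule sym)
  also have "\<dots> = ?rhs (Suc n)"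
    unfolding N_def Y_def Z_def by (simp add: algebra_simps)
  finally show ?case .
qed

lemma A_seq_sum_difference:
  fixes a m :: rat
  assumes "m \<noteq> 0" "(a - 1) * (a + 2) \<noteq> 0"
  defines "E \<equiv> 6 * (a - 1) * (a + 2)"
  shows "(\<Sum>k<n. A_seq a k / (m ^ k * (of_nat k + 2)))
      - ((4 - m) / E * (\<Sum>k\<le>Suc n. of_nat k * A_seq a k / m ^ k)
         + (m - 6) / E * (\<Sum>k\<le>Suc n. A_seq a k / m ^ k)
         + (2 * a * (a + 1) - m) / E * (\<Sum>k\<le>n. A_seq a k / (m ^ k * (of_nat k + 1))))
    = - ((4 * of_nat n - 6 + 2 * a * (a + 1) / (of_nat n + 1)) * (A_seq a n / m ^ n)
        + (4 * of_nat n - 2 - m * of_nat n) * (A_seq a (Suc n) / m ^ Suc n)) / E"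
proof -
  have "E \<noteq> 0" using assms(2) by (simp add: E_def)
  have "S2 - ((4 - m) / E * S1 + (m - 6) / E * S0 + (2 * a * (a + 1) - m) / E * Sm)
      = - ((4 - m) * S1 + (m - 6) * S0 + (2 * a * (a + 1) - m) * Sm - E * S2) / E"
    for S1 S0 Sm S2 using \<open>E \<noteq> 0\<close> by (simp add: field_simps)
  also note A_seq_sum_identity[OF assms(1), of a n, folded E_def]
  finally show ?thesis .
qed

lemma p_integral_iff_fraction:
  "p_integral p x \<longleftrightarrow> (\<exists>u v. x = of_int u / of_int v \<and> \<not> int p dvd v)"
proof
  assume "p_integral p x"
  moreover obtain u v where q: "quotient_of x = (u, v)" by fastforce
  ultimately show "\<exists>u v. x = of_int u / of_int v \<and> \<not> int p dvd v"
    unfolding p_integral_def using quotient_of_div[OF q] by auto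
next
  assume "\<exists>u v. x = of_int u / of_int v \<and> \<not> int p dvd v"
  then obtain u v where x: "x = of_int u / of_int v" and v: "\<not> int p dvd v" by blast
  obtain n d where q: "quotient_of x = (n, d)" by fastforce
  have "d dvd n * v"
  proof -
    have "(of_int (u * d) :: rat) = of_int (n * v)"
      using x quotient_of_div[OF q] quotient_of_denom_pos[OF q] v by (auto simp: field_simps)
    then show ?thesis by (metis dvd_triv_right of_int_eq_iff)
  qed
  then have "d dvd v"
    using quotient_of_coprime[OF q] by (metis coprime_commute coprime_dvd_mult_right_iff)
  then show "p_integral p x"
    unfolding p_integral_def q using v dvd_trans by auto
qed

lemma rat_cong_iff_diff: "rat_cong x y p r \<longleftrightarrow> rat_cong (x - y) 0 p r"
  by (simp add: rat_cong_def)

lemma p_integral_minus_iff [simp]: "p_integral p (- x) \<longleftrightarrow> p_integral p x"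
  unfolding p_integral_iff_fraction by (metis minus_divide_left minus_minus of_int_minus)

lemma rat_cong_0_minus: "rat_cong x 0 p r \<Longrightarrow> rat_cong (- x) 0 p r"
  unfolding rat_cong_def by simp

lemma p_integral_inverse_of_nat: "\<not> p dvd n \<Longrightarrow> p_integral p (inverse (of_nat n))"
  unfolding p_integral_iff_fraction
  by (intro exI[of _ 1] exI[of _ "int n"]) (simp add: divide_inverse)

lemma prime_dvd_central_binomial:
  assumes "prime p" "n < p" "p \<le> 2 * n"
  shows "p dvd ((2 * n) choose n)"
proof -
  have "fact n * fact n * ((2 * n) choose n) = fact (2 * n)"
    using binomial_fact_lemma[of n "2 * n"] by simp
  moreover have "p dvd fact (2 * n)" and "\<not> p dvd fact n"
    using assms by (simp_all add: prime_dvd_fact_iff)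
  ultimately show ?thesis
    using assms(1) by (metis prime_dvd_mult_iff)
qed

context
  fixes p :: nat
  assumes prime: "prime p"
begin

lemma p_integral_of_int [simp]: "p_integral p (of_int n)"
  unfolding p_integral_iff_fraction using prime
  by (intro exI[of _ n] exI[of _ 1]) (auto simp: prime_gt_1_nat)

lemma p_integral_of_nat [simp]: "p_integral p (of_nat n)"
  using p_integral_of_int[of "int n"] by simp

lemma p_integral_numeral [simp]: "p_integral p (numeral n)"
  using p_integral_of_int[of "numeral n"] by simp

lemma p_integral_0 [simp]: "p_integral p 0" and p_integral_1 [simp]: "p_integral p 1"
  using p_integral_of_int[of 0] p_integral_of_int[of 1] by simp_all

lemma p_integral_add: "p_integral p x \<Longrightarrow> p_integral p y \<Longrightarrow> p_integral p (x + y)"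
  unfolding p_integral_iff_fraction
proof (elim exE conjE)
  fix u v u' v'
  assume "x = of_int u / of_int v" "\<not> int p dvd v" "y = of_int u' / of_int v'" "\<not> int p dvd v'"
  moreover have "v \<noteq> 0" "v' \<noteq> 0" using calculation by auto
  ultimately show "\<exists>u v. x + y = of_int u / of_int v \<and> \<not> int p dvd v"
    using prime by (intro exI[of _ "u * v' + u' * v"] exI[of _ "v * v'"])
      (simp add: field_simps prime_dvd_mult_iff)
qed

lemma p_integral_mult: "p_integral p x \<Longrightarrow> p_integral p y \<Longrightarrow> p_integral p (x * y)"
  unfolding p_integral_iff_fraction
proof (elim exE conjE)
  fix u v u' v'
  assume "x = of_int u / of_int v" "\<not> int p dvd v" "y = of_int u' / of_int v'" "\<not> int p dvd v'"
  then show "\<exists>u v. x * y = of_int u / of_int v \<and> \<not> int p dvd v"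
    using prime by (intro exI[of _ "u * u'"] exI[of _ "v * v'"]) (simp add: prime_dvd_mult_iff)
qed

lemma p_integral_diff: "p_integral p x \<Longrightarrow> p_integral p y \<Longrightarrow> p_integral p (x - y)"
  using p_integral_add[of x "- y"] by simp

lemma p_integral_power: "p_integral p x \<Longrightarrow> p_integral p (x ^ k)"
  by (induction k) (auto intro: p_integral_mult)

lemma p_integral_prod:
  "(\<And>i. i \<in> S \<Longrightarrow> p_integral p (f i)) \<Longrightarrow> p_integral p (\<Prod>i\<in>S. f i)"
  by (induction S rule: infinite_finite_induct) (auto intro: p_integral_mult)

lemma p_integral_divide:
  "p_integral p x \<Longrightarrow> p_integral p (inverse y) \<Longrightarrow> p_integral p (x / y)"
  unfolding divide_inverse by (rule p_integral_mult)

lemma p_integral_inverse: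
  assumes "p_integral p x" and "\<not> rat_cong x 0 p 1"
  shows "p_integral p (inverse x)"
proof -
  obtain u v where x: "x = of_int u / of_int v" and v: "\<not> int p dvd v"
    using assms(1) unfolding p_integral_iff_fraction by blast
  have "\<not> int p dvd u"
  proof
    assume "int p dvd u"
    then obtain w where "u = int p * w" ..
    then have "(x - 0) / of_nat p ^ 1 = of_int w / of_int v"
      using x prime by (simp add: field_simps prime_gt_0_nat)
    with assms(2) v show False
      unfolding rat_cong_def p_integral_iff_fraction by auto
  qed
  then show ?thesis
    unfolding p_integral_iff_fraction x by (intro exI[of _ v] exI[of _ u]) simp
qed

lemma rat_cong_0_add:
  "rat_cong x 0 p r \<Longrightarrow> rat_cong y 0 p r \<Longrightarrow> rat_cong (x + y) 0 p r"
  unfolding rat_cong_def using p_integral_add by (simp add: add_divide_distrib)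

lemma rat_cong_0_mult_left:
  "p_integral p c \<Longrightarrow> rat_cong x 0 p r \<Longrightarrow> rat_cong (c * x) 0 p r"
  unfolding rat_cong_def using p_integral_mult[of c "x / of_nat p ^ r"] by simp

lemma rat_cong_0_mult:
  "rat_cong x 0 p r \<Longrightarrow> rat_cong y 0 p s \<Longrightarrow> rat_cong (x * y) 0 p (r + s)"
  unfolding rat_cong_def using p_integral_mult[of "x / of_nat p ^ r" "y / of_nat p ^ s"]
  by (simp add: power_add)

lemma rat_cong_0_divide:
  "p_integral p (inverse y) \<Longrightarrow> rat_cong x 0 p r \<Longrightarrow> rat_cong (x / y) 0 p r"
  unfolding rat_cong_def using p_integral_mult[of "x / of_nat p ^ r" "inverse y"]
  by (simp add: divide_inverse mult_ac)

lemma rat_cong_0_of_nat: "p dvd n \<Longrightarrow> rat_cong (of_nat n) 0 p 1"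
  unfolding rat_cong_def using prime by (auto simp: prime_gt_0_nat)

lemma p_integral_cong_residue:
  assumes "p_integral p c"
  shows "\<exists>i<p. rat_cong c (of_nat i) p 1"
proof -
  obtain u v where c: "c = of_int u / of_int v" and v: "\<not> int p dvd v"
    using assms unfolding p_integral_iff_fraction by blast
  have "coprime v (int p)"
    using v prime by (metis coprime_commute prime_imp_coprime prime_nat_int_transfer)
  then obtain w where w: "[v * w = 1] (mod int p)"
    by (metis cong_solve_coprime_int)
  define i where "i = (u * w) mod int p"
  have i: "0 \<le> i" "i < int p"
    unfolding i_def using prime by (auto simp: prime_gt_0_nat)
  have "[u * 1 = u * (v * w)] (mod int p)"
    using w by (intro cong_scalar_left) (rule cong_sym)
  also have "u * (v * w) = (u * w) * v" by (simp add: mult_ac)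
  also have "[(u * w) * v = i * v] (mod int p)"
    unfolding i_def by (intro cong_scalar_right) simp
  finally obtain z where z: "u - i * v = int p * z"
    by (auto simp: cong_iff_dvd_diff elim: dvdE)
  have "v \<noteq> 0" using v by auto
  have "(c - of_int i) * of_int v = of_int (u - i * v)"
    using c \<open>v \<noteq> 0\<close> by (simp add: field_simps)
  also have "\<dots> = of_nat p * of_int z" using z by simp
  finally have "(c - of_int i) / of_nat p = of_int z / of_int v"
    using \<open>v \<noteq> 0\<close> prime by (simp add: field_simps prime_gt_0_nat)
  then have "rat_cong c (of_nat (nat i)) p 1"
    unfolding rat_cong_def p_integral_iff_fraction using i v by auto
  then show ?thesis using i by (intro exI[of _ "nat i"]) auto
qed

lemma gbinomial_cong_0:
  assumes c: "p_integral p c" and "k < p"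
    and not_cong: "\<forall>j<p - k. \<not> rat_cong c (- of_nat (Suc j)) p 1"
  shows "rat_cong (c gchoose k) 0 p 1"
proof -
  obtain i where "i < p" and ci: "rat_cong c (of_nat i) p 1"
    using p_integral_cong_residue[OF c] by blast
  have "i < k"
  proof (rule ccontr)
    assume "\<not> i < k"
    have "(c - - of_nat (Suc (p - Suc i))) / of_nat p ^ 1 = (c - of_nat i) / of_nat p ^ 1 + 1"
      using \<open>i < p\<close> prime by (simp add: of_nat_diff field_simps prime_gt_0_nat)
    then have "rat_cong c (- of_nat (Suc (p - Suc i))) p 1"
      using ci prime unfolding rat_cong_def by (simp add: p_integral_add)
    moreover have "p - Suc i < p - k" using \<open>\<not> i < k\<close> \<open>i < p\<close> by simp
    ultimately show False using not_cong by blast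
  qed
  have "c gchoose k
      = (inverse (fact k) * (\<Prod>j\<in>{0..<k} - {i}. c - of_nat j)) * (c - of_nat i)"
    using gbinomial_mult_fact[of k c] prod.remove[of "{0..<k}" i "\<lambda>j. c - of_nat j"]
      \<open>i < k\<close>
    by (simp add: field_simps)
  moreover have "p_integral p (inverse (fact k))"
    using p_integral_inverse_of_nat[of p "fact k"] prime \<open>k < p\<close>
    by (simp add: prime_dvd_fact_iff)
  moreover have "p_integral p (\<Prod>j\<in>{0..<k} - {i}. c - of_nat j)"
    using prime c by (intro p_integral_prod p_integral_diff) simp_all
  ultimately show ?thesis
    using ci prime by (metis rat_cong_0_mult_left p_integral_mult rat_cong_iff_diff)
qed

lemma A_seq_cong_0_cube:
  assumes a: "p_integral p a" and "n < p" "p \<le> 2 * n"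
    and not_cong:
      "\<forall>j<p - n. \<not> rat_cong a (of_nat j) p 1 \<and> \<not> rat_cong a (- of_nat (Suc j)) p 1"
  shows "rat_cong (A_seq a n) 0 p 3"
proof -
  have "rat_cong (a gchoose n) 0 p 1"
    using gbinomial_cong_0 a \<open>n < p\<close> not_cong by blast
  moreover have "rat_cong ((-1 - a) gchoose n) 0 p 1"
  proof (rule gbinomial_cong_0)
    show "p_integral p (-1 - a)" using prime a by (simp add: p_integral_diff)
    have "rat_cong (-1 - a) (- of_nat (Suc j)) p 1 \<longleftrightarrow> rat_cong a (of_nat j) p 1" for j
    proof -
      have "(-1 - a - - of_nat (Suc j)) / of_nat p ^ 1 = - ((a - of_nat j) / of_nat p ^ 1)"
        by (simp add: minus_divide_left)
      then show ?thesis unfolding rat_cong_def by simp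
    qed
    then show "\<forall>j<p - n. \<not> rat_cong (-1 - a) (- of_nat (Suc j)) p 1"
      using not_cong by blast
  qed (use \<open>n < p\<close> in simp)
  moreover have "rat_cong (of_nat ((2 * n) choose n)) 0 p 1"
    using prime assms(2,3) by (intro rat_cong_0_of_nat prime_dvd_central_binomial)
  ultimately have "rat_cong (A_seq a n) 0 p (1 + 1 + 1)"
    unfolding A_seq_def using prime by (intro rat_cong_0_mult)
  then show ?thesis by (simp add: numeral_3_eq_3)
qed

end

theorem theorem6p1:
  fixes p :: nat and a m :: rat
  assumes "prime p" and "p > 3"
    and "p_integral p a" and "p_integral p m"
    and "\<not> rat_cong m 0 p 1"
    and "\<not> rat_cong a 0 p 1" and "\<not> rat_cong a 1 p 1"
    and "\<not> rat_cong a (-1) p 1" and "\<not> rat_cong a (-2) p 1"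
  shows "rat_cong
    (\<Sum>k = 0..p-3. A_seq a k / (m ^ k * (of_nat k + 2)))
    ((4 - m) / (6 * (a - 1) * (a + 2)) * (\<Sum>k = 0..p-1. of_nat k * A_seq a k / m ^ k)
     + (m - 6) / (6 * (a - 1) * (a + 2)) * (\<Sum>k = 0..p-1. A_seq a k / m ^ k)
     + (2 * a * (a + 1) - m) / (6 * (a - 1) * (a + 2))
         * (\<Sum>k = 0..p-2. A_seq a k / (m ^ k * (of_nat k + 1))))
    p 3"
proof -
  define n where "n = p - 2"
  have p: "p = Suc (Suc n)" "2 \<le> n"
    and ranges: "{0..p - 3} = {..<n}" "{0..p - 2} = {..n}" "{0..p - 1} = {..Suc n}"
    using assms(2) by (auto simp: n_def)
  have "m \<noteq> 0" "(a - 1) * (a + 2) \<noteq> 0"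
    using assms(1,5,7,9) by (auto simp: rat_cong_def)
  note difference = A_seq_sum_difference[OF this, of n]
  have "\<not> p dvd 6"
    using assms(1,2) prime_dvd_mult_iff[of p 2 3] by (auto dest: dvd_imp_le)
  then have "p_integral p (inverse 6)"
    using assms(1) p_integral_inverse_of_nat[of p 6] by simp
  moreover have "p_integral p (inverse (a - 1))" "p_integral p (inverse (a + 2))"
    using assms(1,3,7,9) by (auto intro!: p_integral_inverse p_integral_diff p_integral_add
        simp: rat_cong_iff_diff[of a])
  ultimately have "p_integral p (inverse (6 * (a - 1) * (a + 2)))"
    using assms(1) by (metis inverse_mult_distrib p_integral_mult)
  moreover have "p_integral p (inverse (of_nat n + 1))"
    using assms(1) p_integral_inverse_of_nat[of p "Suc n"]
    by (simp add: p(1) add.commute nat_dvd_not_less)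
  moreover have "p_integral p (inverse m)"
    using assms(1,4,5) by (rule p_integral_inverse)
  moreover have "rat_cong (A_seq a n) 0 p 3" "rat_cong (A_seq a (Suc n)) 0 p 3"
    using assms(1,3,6-9) p(2) by (auto intro!: A_seq_cong_0_cube simp: p less_Suc_eq numeral_2_eq_2)
  ultimately show ?thesis
    unfolding ranges using assms(1,3,4)
    by (subst rat_cong_iff_diff, unfold difference)
      (intro rat_cong_0_divide rat_cong_0_minus rat_cong_0_add rat_cong_0_mult_left;
        simp add: p_integral_add p_integral_diff p_integral_mult p_integral_divide p_integral_power
          flip: power_inverse)
qed

end
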